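(* Consider the following random process producing a new population (clade) of finite surreal forms from an existing finite population $\mathcal{C}$ of finite surreal forms. To create each member of the new clade independently: draw a number of parents $n_p \sim \mathrm{Poisson}(\lambda)$ with $\lambda>0$; select $n_p$ surreal forms from $\mathcal{C}$, each chosen independently with probability proportional to $w_{g(x)}$, where $(w_k)_{k\ge0}$ is a non-negative weighting depending only on the generation; sort the chosen parents into an ordered list $P$; choose a split point $s\in\{0,\dots,n_p\}$ from a split distribution $D_s(n_p)$; and set $x=\{X_L\mid X_R\}$ with $X_L=\{P[1],\dots,P[s]\}$ and $X_R=\{P[s+1],\dots,P[n_p]\}$ (each empty when the index range is empty). Let $g_k$ denote the proportion of members of $\mathcal{C}$ with generation $k$, let $Z=\sum_{i\ge0} g_i w_i$ (assumed positive), $z_k=g_k w_k/Z$ and $Z_k=\sum_{i=0}^k z_i$. Then for every $k\ge0$, the generation distribution of the new clade has CDF $$G'_{k+1} = e^{\lambda(Z_k-1)},$$ i.e. a member $x'$ of the new clade satisfies $\Pr[g(x')\le k+1]=e^{\lambda(Z_k-1)}$.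
   Context: A (short) surreal form is $x=\{X_L\mid X_R\}$ where $X_L,X_R$ are finite (possibly empty) sets of previously constructed surreal forms such that no element of $X_R$ is $\le$ any element of $X_L$; the base form is $\bar 0=\{\emptyset\mid\emptyset\}$. The elements of $X_L\cup X_R$ are the parents of $x$. The generation is defined by $g(\bar 0)=0$ and $g(x)=1+\max_{p\in X_L\cup X_R} g(p)$. *)

theory Defs
  imports "HOL-Probability.Probability" "HOL-Library.FSet"
begin

datatype form = Form "form fset" "form fset"

definition zero_form :: form where "zero_form = Form {||} {||}"

primrec gen :: "form \<Rightarrow> nat" where
  "gen (Form L R) =
     (if L = {||} \<and> R = {||} then 0 else Suc (fMax (fimage gen L |\<union>| fimage gen R)))"

text \<open>Conway's order x \<le> y: no left option xl of x with y \<le> xl and no right option yr of y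
  with yr \<le> x.  Defined by recursion on a fuel parameter; the fuel gen x + gen y suffices.\<close>
fun form_le_fuel :: "nat \<Rightarrow> form \<Rightarrow> form \<Rightarrow> bool" where
  "form_le_fuel 0 x y = True"
| "form_le_fuel (Suc n) (Form XL XR) (Form YL YR) =
     ((\<forall>xl\<in>fset XL. \<not> form_le_fuel n (Form YL YR) xl) \<and>
      (\<forall>yr\<in>fset YR. \<not> form_le_fuel n yr (Form XL XR)))"

definition form_le :: "form \<Rightarrow> form \<Rightarrow> bool" where
  "form_le x y = form_le_fuel (gen x + gen y) x y"

inductive surreal :: "form \<Rightarrow> bool" where
  "(\<forall>a\<in>fset L. surreal a) \<Longrightarrow> (\<forall>a\<in>fset R. surreal a) \<Longrightarrow>
   (\<forall>r\<in>fset R. \<forall>l\<in>fset L. \<not> form_le r l) \<Longrightarrow> surreal (Form L R)"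

definition gen_prop :: "form multiset \<Rightarrow> nat \<Rightarrow> real" where
  "gen_prop C k = real (size (filter_mset (\<lambda>x. gen x = k) C)) / real (size C)"

definition pick_parent :: "(nat \<Rightarrow> real) \<Rightarrow> form multiset \<Rightarrow> form pmf" where
  "pick_parent w C = embed_pmf (\<lambda>x. real (count C x) * w (gen x) /
       (\<Sum>y\<in>set_mset C. real (count C y) * w (gen y)))"

definition new_member ::
  "real \<Rightarrow> (nat \<Rightarrow> real) \<Rightarrow> (nat \<Rightarrow> nat pmf) \<Rightarrow> (form list \<Rightarrow> form list) \<Rightarrow> form multiset \<Rightarrow> form pmf" where
  "new_member lam w Ds srt C =
     do { np \<leftarrow> poisson_pmf lam;
          ps \<leftarrow> replicate_pmf np (pick_parent w C);
          s \<leftarrow> Ds np;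
          let P = srt ps;
          return_pmf (Form (fset_of_list (take s P)) (fset_of_list (drop s P))) }"

end

theory Submission
  imports Defs
begin

text \<open>A new form has generation at most \<open>k + 1\<close> exactly when all of its parents have generation
  at most \<open>k\<close>; how the parents are sorted and split is irrelevant. Each parent independently has
  this property with probability \<open>Z\<^sub>k\<close>, so given \<open>n\<^sub>p\<close> the event has probability \<open>Z\<^sub>k ^ n\<^sub>p\<close>, and
  averaging over \<open>n\<^sub>p \<sim> Poisson(\<lambda>)\<close> with its generating function \<open>E[q ^ n\<^sub>p] = e ^ (\<lambda>(q - 1))\<close>
  gives the claim.\<close>

lemma integral_poisson_pmf_power:
  fixes lam q :: real
  assumes "lam > 0"
  shows "(\<integral>n. q ^ n \<partial>poisson_pmf lam) = exp (lam * (q - 1))"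
proof -
  have pmf_times:
    "pmf (poisson_pmf lam) n * q ^ n = exp (-lam) * ((lam * q) ^ n /\<^sub>R fact n)" for n
    using assms by (simp add: power_mult_distrib field_simps)
  have sums: "(\<lambda>n. pmf (poisson_pmf lam) n * q ^ n) sums (exp (-lam) * exp (lam * q))"
    unfolding pmf_times by (intro sums_mult exp_converges)
  have "summable (\<lambda>n. norm (pmf (poisson_pmf lam) n * q ^ n))"
    unfolding pmf_times norm_mult by (intro summable_mult summable_norm_exp)
  then have "integrable (count_space UNIV) (\<lambda>n. pmf (poisson_pmf lam) n * q ^ n)"
    by (simp add: integrable_count_space_nat_iff)
  then have "(\<integral>n. pmf (poisson_pmf lam) n * q ^ n \<partial>count_space UNIV) =
      exp (-lam) * exp (lam * q)"
    using sums_integral_count_space_nat sums sums_unique2 by blast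
  moreover have "(\<integral>n. q ^ n \<partial>poisson_pmf lam) =
      (\<integral>n. pmf (poisson_pmf lam) n * q ^ n \<partial>count_space UNIV)"
    unfolding measure_pmf_eq_density by (subst integral_density) auto
  ultimately show ?thesis
    by (simp add: mult_exp_exp algebra_simps)
qed

lemma measure_bind_pmf:
  "measure_pmf.prob (bind_pmf M f) X = (\<integral>x. measure_pmf.prob (f x) X \<partial>M)"
  unfolding measure_pmf_bind
  by (rule measure_pmf.measure_bind[where N = "count_space UNIV"])
    (auto intro: measure_pmf_in_subprob_algebra)

lemma prob_replicate_pmf_lists:
  "measure_pmf.prob (replicate_pmf n p) (lists A) = measure_pmf.prob p A ^ n"
proof (induction n)
  case 0
  then show ?case by simp
next
  case (Suc n)
  have "replicate_pmf (Suc n) p = p \<bind> (\<lambda>x. map_pmf (Cons x) (replicate_pmf n p))"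
    by (simp add: map_pmf_def)
  moreover have "measure_pmf.prob (map_pmf (Cons x) (replicate_pmf n p)) (lists A) =
        indicator A x * measure_pmf.prob p A ^ n" for x
    using Suc by (simp add: vimage_def split: split_indicator)
  ultimately show ?case
    by (simp add: measure_bind_pmf)
qed

lemma gen_Form_le_Suc_iff:
  "gen (Form L R) \<le> Suc k \<longleftrightarrow> (\<forall>p \<in> fset L \<union> fset R. gen p \<le> k)"
proof (cases "L = {||} \<and> R = {||}")
  case False
  let ?S = "gen |`| L |\<union>| gen |`| R"
  have "?S \<noteq> {||}" using False by auto
  then have "fMax ?S \<le> k \<longleftrightarrow> (\<forall>i. i |\<in>| ?S \<longrightarrow> i \<le> k)"
    by (metis fMax_ge fMax_in order_trans)
  with False show ?thesis by auto
qed simp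

lemma prob_new_member_gen_le_Suc:
  assumes srt_set: "\<And>xs. set xs \<subseteq> set_pmf (pick_parent w C) \<Longrightarrow> set (srt xs) = set xs"
  shows "measure_pmf.prob (new_member lam w Ds srt C) {x. gen x \<le> Suc k} =
    (\<integral>n. measure_pmf.prob (pick_parent w C) {x. gen x \<le> k} ^ n \<partial>poisson_pmf lam)"
proof -
  let ?p = "pick_parent w C" and ?A = "{x. gen x \<le> k}"
  let ?child = "\<lambda>s xs. Form (fset_of_list (take s xs)) (fset_of_list (drop s xs))"
  have child_gen: "gen (?child s (srt ps)) \<le> Suc k \<longleftrightarrow> ps \<in> lists ?A"
    if "ps \<in> set_pmf (replicate_pmf n ?p)" for ps s n
  proof -
    have "set (take s (srt ps)) \<union> set (drop s (srt ps)) = set ps"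
      using that srt_set[of ps] by (auto simp: set_replicate_pmf simp flip: set_append)
    then show ?thesis
      by (auto simp: gen_Form_le_Suc_iff fset_of_list.rep_eq simp del: gen.simps)
  qed
  have "measure_pmf.prob
      (replicate_pmf n ?p \<bind> (\<lambda>ps. Ds n \<bind> (\<lambda>s. return_pmf (?child s (srt ps)))))
      {x. gen x \<le> Suc k} = (\<integral>ps. indicator (lists ?A) ps \<partial>replicate_pmf n ?p)" for n
    unfolding measure_bind_pmf
    by (intro integral_cong_AE)
      (auto simp: AE_measure_pmf_iff child_gen indicator_def simp del: gen.simps)
  then show ?thesis
    unfolding new_member_def Let_def measure_bind_pmf[of "poisson_pmf lam"]
    by (simp add: prob_replicate_pmf_lists del: gen.simps)
qed

definition clade_weight :: "(nat \<Rightarrow> real) \<Rightarrow> form multiset \<Rightarrow> form set \<Rightarrow> real" where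
  "clade_weight w C A = (\<Sum>y \<in> set_mset C \<inter> A. real (count C y) * w (gen y))"

lemma sum_gen_prop_mult:
  assumes "finite I"
  shows "(\<Sum>i\<in>I. gen_prop C i * w i) = clade_weight w C (gen -` I) / real (size C)"
proof -
  have gen_prop_mult: "gen_prop C i * w i = clade_weight w C (gen -` {i}) / real (size C)" for i
    by (simp add: gen_prop_def clade_weight_def size_multiset_overloaded_eq sum_distrib_right
        Int_def conj_commute)
  have "(\<Sum>i\<in>I. clade_weight w C (gen -` {i})) = clade_weight w C (gen -` I)"
    unfolding clade_weight_def using assms
    by (subst sum.group[symmetric, where g = gen and T = I]) (auto intro!: sum.cong)
  then show ?thesis
    by (simp add: gen_prop_mult sum_divide_distrib[symmetric])
qed

lemma suminf_gen_prop_mult: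
  "(\<Sum>i. gen_prop C i * w i) = clade_weight w C UNIV / real (size C)"
proof -
  have "(\<Sum>i. gen_prop C i * w i) = (\<Sum>i \<in> gen ` set_mset C. gen_prop C i * w i)"
    by (rule suminf_finite) (auto simp: gen_prop_def)
  moreover have "set_mset C \<inter> gen -` gen ` set_mset C = set_mset C"
    by blast
  ultimately show ?thesis
    by (simp add: sum_gen_prop_mult clade_weight_def)
qed

lemma clade_weight_UNIV:
  "clade_weight w C UNIV = (\<Sum>y\<in>set_mset C. real (count C y) * w (gen y))"
  by (simp add: clade_weight_def)

context
  fixes w :: "nat \<Rightarrow> real" and C :: "form multiset"
  assumes w_nonneg: "\<And>i. w i \<ge> 0" and weight_pos: "clade_weight w C UNIV > 0"
begin

lemma pmf_pick_parent:
  "pmf (pick_parent w C) x = real (count C x) * w (gen x) / clade_weight w C UNIV"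
  unfolding pick_parent_def clade_weight_UNIV[symmetric]
proof (rule pmf_embed_pmf)
  let ?W = "clade_weight w C UNIV"
  show "0 \<le> real (count C x) * w (gen x) / ?W" for x
    using w_nonneg weight_pos by simp
  have "(\<integral>\<^sup>+x. ennreal (real (count C x) * w (gen x) / ?W) \<partial>count_space UNIV)
      = (\<Sum>x\<in>set_mset C. ennreal (real (count C x) * w (gen x) / ?W))"
    by (rule nn_integral_count_space') (auto simp: not_in_iff)
  also have "\<dots> = ennreal (\<Sum>x\<in>set_mset C. real (count C x) * w (gen x) / ?W)"
    using w_nonneg weight_pos by (subst sum_ennreal) auto
  also have "(\<Sum>x\<in>set_mset C. real (count C x) * w (gen x) / ?W) = 1"
    using weight_pos by (simp add: clade_weight_UNIV sum_divide_distrib[symmetric])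
  finally show "(\<integral>\<^sup>+x. ennreal (real (count C x) * w (gen x) / ?W) \<partial>count_space UNIV) = 1"
    by simp
qed

lemma set_pmf_pick_parent_subset: "set_pmf (pick_parent w C) \<subseteq> set_mset C"
  by (auto simp: set_pmf_eq pmf_pick_parent not_in_iff)

lemma prob_pick_parent:
  "measure_pmf.prob (pick_parent w C) A = clade_weight w C A / clade_weight w C UNIV"
proof -
  let ?p = "pick_parent w C"
  have "A \<inter> set_pmf ?p = (set_mset C \<inter> A) \<inter> set_pmf ?p"
    using set_pmf_pick_parent_subset by blast
  then have "measure_pmf.prob ?p A = measure_pmf.prob ?p (set_mset C \<inter> A)"
    by (metis measure_Int_set_pmf)
  also have "\<dots> = (\<Sum>y \<in> set_mset C \<inter> A. pmf ?p y)"
    by (rule measure_measure_pmf_finite) simp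
  finally show ?thesis
    by (simp add: pmf_pick_parent clade_weight_def sum_divide_distrib)
qed

end

theorem theorem1:
  fixes lam :: real and w :: "nat \<Rightarrow> real" and Ds :: "nat \<Rightarrow> nat pmf"
    and srt :: "form list \<Rightarrow> form list" and C :: "form multiset" and k :: nat
  assumes lam_pos: "lam > 0"
    and w_nonneg: "\<And>i. w i \<ge> 0"
    and C_nonempty: "C \<noteq> {#}"
    and C_surreal: "\<And>x. x \<in># C \<Longrightarrow> surreal x"
    and Z_pos: "(\<Sum>i. gen_prop C i * w i) > 0"
    and Ds_range: "\<And>n. set_pmf (Ds n) \<subseteq> {0..n}"
    and srt_perm: "\<And>xs. (\<forall>x\<in>set xs. surreal x) \<Longrightarrow> mset (srt xs) = mset xs"
    and srt_sorted: "\<And>xs. (\<forall>x\<in>set xs. surreal x) \<Longrightarrow> sorted_wrt form_le (srt xs)"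
  shows "measure_pmf.prob (new_member lam w Ds srt C) {x. gen x \<le> k + 1}
       = exp (lam * ((\<Sum>i\<le>k. gen_prop C i * w i / (\<Sum>j. gen_prop C j * w j)) - 1))"
proof -
  have size_pos: "real (size C) > 0"
    using C_nonempty by (simp add: nonempty_has_size)
  have weight_pos: "clade_weight w C UNIV > 0"
    using Z_pos size_pos by (simp add: suminf_gen_prop_mult zero_less_divide_iff)
  have "(\<Sum>i\<le>k. gen_prop C i * w i / (\<Sum>j. gen_prop C j * w j)) =
      (\<Sum>i\<le>k. gen_prop C i * w i) / (\<Sum>j. gen_prop C j * w j)"
    by (simp add: sum_divide_distrib)
  also have "\<dots> = clade_weight w C (gen -` {..k}) / clade_weight w C UNIV"
    using C_nonempty by (simp add: sum_gen_prop_mult suminf_gen_prop_mult)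
  also have "\<dots> = measure_pmf.prob (pick_parent w C) {x. gen x \<le> k}"
    by (simp add: prob_pick_parent[OF w_nonneg weight_pos] vimage_def)
  finally have Z_k: "(\<Sum>i\<le>k. gen_prop C i * w i / (\<Sum>j. gen_prop C j * w j)) =
      measure_pmf.prob (pick_parent w C) {x. gen x \<le> k}" .
  have "set (srt xs) = set xs" if "set xs \<subseteq> set_pmf (pick_parent w C)" for xs
    using that set_pmf_pick_parent_subset[OF w_nonneg weight_pos] C_surreal srt_perm
    by (metis mset_eq_setD subset_iff)
  then show ?thesis
    by (simp add: prob_new_member_gen_le_Suc integral_poisson_pmf_power[OF lam_pos] Z_k
        del: gen.simps)
qed

end
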